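(* Let $(\mathcal{A},[-,-],\alpha)$ be a multiplicative Hom-Malcev superalgebra. Then for every $n\geq0$ the derived Hom-superalgebra $\mathcal{A}^{n}=(\mathcal{A},[-,-]^{(n)}=\alpha^{2^{n}-1}\circ[-,-],\alpha^{2^{n}})$ is also a Hom-Malcev superalgebra.
   Context: $\mathcal{A}=\mathcal{A}_0\oplus\mathcal{A}_1$ is a $\mathbb{Z}_2$-graded vector space over an algebraically closed field $\mathbb{K}$ of characteristic $0$; $|x|$ is the parity of homogeneous $x$; even maps preserve parity. For an even bilinear bracket $[-,-]$ and even linear $\alpha$, $\widetilde{J}(x,y,z)=[[x,y],\alpha(z)]-[\alpha(x),[y,z]]-(-1)^{|y||z|}[[x,z],\alpha(y)]$. A Hom-Malcev superalgebra is a triple $(\mathcal{A},[-,-],\alpha)$ with $\alpha\circ[-,-]=[-,-]\circ(\alpha\otimes\alpha)$, $[x,y]=-(-1)^{|x||y|}[y,x]$, and for all homogeneous $x,y,z,t$: $2[\alpha^{2}(t),\widetilde{J}(x,y,z)]=\widetilde{J}(\alpha(t),\alpha(x),[y,z])+(-1)^{|x|(|y|+|z|)}\widetilde{J}(\alpha(t),\alpha(y),[z,x])+(-1)^{|z|(|x|+|y|)}\widetilde{J}(\alpha(t),\alpha(z),[x,y])$. *)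

theory Defs
  imports "HOL-Computational_Algebra.Polynomial"
begin

definition alg_closed_field :: "'k::field itself \<Rightarrow> bool" where
  "alg_closed_field _ \<longleftrightarrow> (\<forall>p :: 'k poly. 0 < degree p \<longrightarrow> (\<exists>x. poly p x = 0))"

definition graded_vs :: "('k::field \<Rightarrow> 'v::ab_group_add \<Rightarrow> 'v) \<Rightarrow> (nat \<Rightarrow> 'v set) \<Rightarrow> bool" where
  "graded_vs scale V \<longleftrightarrow> vector_space scale
     \<and> module.subspace scale (V 0) \<and> module.subspace scale (V 1)
     \<and> V 0 \<inter> V 1 = {0}
     \<and> (\<forall>v. \<exists>a\<in>V 0. \<exists>b\<in>V 1. v = a + b)"

definition hom_superalgebra ::
  "('k::field \<Rightarrow> 'v::ab_group_add \<Rightarrow> 'v) \<Rightarrow> (nat \<Rightarrow> 'v set) \<Rightarrow> ('v \<Rightarrow> 'v \<Rightarrow> 'v) \<Rightarrow> ('v \<Rightarrow> 'v) \<Rightarrow> bool" where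
  "hom_superalgebra scale V br al \<longleftrightarrow> graded_vs scale V
     \<and> (\<forall>x. Vector_Spaces.linear scale scale (br x))
     \<and> (\<forall>y. Vector_Spaces.linear scale scale (\<lambda>x. br x y))
     \<and> Vector_Spaces.linear scale scale al
     \<and> (\<forall>i\<in>{0,1}. \<forall>j\<in>{0,1}. \<forall>x\<in>V i. \<forall>y\<in>V j. br x y \<in> V ((i + j) mod 2))
     \<and> (\<forall>i\<in>{0,1}. \<forall>x\<in>V i. al x \<in> V i)"

text \<open>The super Hom-Jacobian J~(x,y,z); b and c are the parities of y and z.\<close>
definition hom_jac ::
  "('k::field \<Rightarrow> 'v::ab_group_add \<Rightarrow> 'v) \<Rightarrow> ('v \<Rightarrow> 'v \<Rightarrow> 'v) \<Rightarrow> ('v \<Rightarrow> 'v)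
   \<Rightarrow> nat \<Rightarrow> nat \<Rightarrow> 'v \<Rightarrow> 'v \<Rightarrow> 'v \<Rightarrow> 'v" where
  "hom_jac scale br al b c x y z =
     br (br x y) (al z) - br (al x) (br y z) - scale ((-1) ^ (b * c)) (br (br x z) (al y))"

definition hom_malcev_superalgebra ::
  "('k::field \<Rightarrow> 'v::ab_group_add \<Rightarrow> 'v) \<Rightarrow> (nat \<Rightarrow> 'v set) \<Rightarrow> ('v \<Rightarrow> 'v \<Rightarrow> 'v) \<Rightarrow> ('v \<Rightarrow> 'v) \<Rightarrow> bool" where
  "hom_malcev_superalgebra scale V br al \<longleftrightarrow> hom_superalgebra scale V br al
     \<and> (\<forall>x y. al (br x y) = br (al x) (al y))
     \<and> (\<forall>i\<in>{0,1}. \<forall>j\<in>{0,1}. \<forall>x\<in>V i. \<forall>y\<in>V j. br x y = - scale ((-1) ^ (i * j)) (br y x))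
     \<and> (\<forall>a\<in>{0,1}. \<forall>b\<in>{0,1}. \<forall>c\<in>{0,1}. \<forall>d\<in>{0,1}.
          \<forall>x\<in>V a. \<forall>y\<in>V b. \<forall>z\<in>V c. \<forall>t\<in>V d.
          scale 2 (br (al (al t)) (hom_jac scale br al b c x y z)) =
            hom_jac scale br al a (b + c) (al t) (al x) (br y z)
          + scale ((-1) ^ (a * (b + c))) (hom_jac scale br al b (c + a) (al t) (al y) (br z x))
          + scale ((-1) ^ (c * (a + b))) (hom_jac scale br al c (a + b) (al t) (al z) (br x y)))"

definition multiplicative :: "('v \<Rightarrow> 'v \<Rightarrow> 'v) \<Rightarrow> ('v \<Rightarrow> 'v) \<Rightarrow> bool" where
  "multiplicative br al \<longleftrightarrow> (\<forall>x y. al (br x y) = br (al x) (al y))"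

end

theory Submission
  imports Defs
begin

text \<open>For every \<open>m\<close>, twisting a multiplicative Hom-Malcev superalgebra to
  \<open>(\<alpha>\<^sup>m \<circ> [-,-], \<alpha>\<^sup>m\<^sup>+\<^sup>1)\<close> gives again a Hom-Malcev superalgebra; the derived algebra
  \<open>\<A>\<^sup>n\<close> is the case \<open>m = 2\<^sup>n - 1\<close>. Since \<open>\<alpha>\<close> is linear and commutes with the bracket, the
  twisted Hom-Jacobian is \<open>\<alpha>\<^sup>2\<^sup>m\<close> applied to the original one, and both sides of the twisted
  Hom-Malcev identity are \<open>\<alpha>\<^sup>3\<^sup>m\<close> applied to the two sides of the original identity.\<close>

lemma linear_funpow:
  assumes "Vector_Spaces.linear scale scale f"
  shows "Vector_Spaces.linear scale scale (f ^^ n)"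
proof (induction n)
  case 0
  have "vector_space scale"
    using assms by (simp add: Vector_Spaces.linear_iff)
  then show ?case
    by (simp add: vector_space.linear_ident)
next
  case (Suc n)
  then show ?case
    unfolding funpow.simps(2) by (rule Vector_Spaces.linear_compose[OF _ assms])
qed

lemma multiplicative_funpow:
  assumes "multiplicative br f"
  shows "multiplicative br (f ^^ n)"
  using assms unfolding multiplicative_def by (induction n) auto

lemma funpow_closed:
  assumes "\<And>x. x \<in> S \<Longrightarrow> f x \<in> S" and "x \<in> S"
  shows "(f ^^ n) x \<in> S"
  by (induction n) (use assms in auto)

lemma funpow_add_apply: "(f ^^ k) ((f ^^ l) x) = (f ^^ (k + l)) x"
  by (simp add: funpow_add)

lemma hom_superalgebra_twist:
  assumes "hom_superalgebra scale V br al"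
  shows "hom_superalgebra scale V (\<lambda>x y. (al ^^ m) (br x y)) (al ^^ Suc m)"
proof -
  have gv: "graded_vs scale V"
    and lin_left: "\<And>x. Vector_Spaces.linear scale scale (br x)"
    and lin_right: "\<And>y. Vector_Spaces.linear scale scale (\<lambda>x. br x y)"
    and lin: "Vector_Spaces.linear scale scale al"
    and even_br: "\<forall>i\<in>{0,1}. \<forall>j\<in>{0,1}. \<forall>x\<in>V i. \<forall>y\<in>V j. br x y \<in> V ((i + j) mod 2)"
    and even_al: "\<forall>i\<in>{0,1}. \<forall>x\<in>V i. al x \<in> V i"
    using assms unfolding hom_superalgebra_def by blast+
  have closed: "(al ^^ k) x \<in> V i" if "i \<in> {0,1}" "x \<in> V i" for i k x
    using that even_al by (intro funpow_closed) auto
  show ?thesis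
    unfolding hom_superalgebra_def
  proof (intro conjI gv allI ballI linear_funpow[OF lin])
    fix x
    show "Vector_Spaces.linear scale scale (\<lambda>y. (al ^^ m) (br x y))"
      using Vector_Spaces.linear_compose[OF lin_left linear_funpow[OF lin]] by (simp add: o_def)
  next
    fix y
    show "Vector_Spaces.linear scale scale (\<lambda>x. (al ^^ m) (br x y))"
      using Vector_Spaces.linear_compose[OF lin_right linear_funpow[OF lin]] by (simp add: o_def)
  next
    fix i j x y assume "i \<in> {0,1::nat}" "j \<in> {0,1::nat}" "x \<in> V i" "y \<in> V j"
    then show "(al ^^ m) (br x y) \<in> V ((i + j) mod 2)"
      using even_br by (intro closed) auto
  next
    fix i x assume "i \<in> {0,1::nat}" "x \<in> V i"
    then show "(al ^^ Suc m) x \<in> V i"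
      by (rule closed)
  qed
qed

context
  fixes scale :: "'k::field \<Rightarrow> 'v::ab_group_add \<Rightarrow> 'v"
    and br :: "'v \<Rightarrow> 'v \<Rightarrow> 'v"
    and al :: "'v \<Rightarrow> 'v"
  assumes lin: "Vector_Spaces.linear scale scale al"
    and mult: "multiplicative br al"
begin

lemma funpow_hom_jac:
  "(al ^^ k) (hom_jac scale br al b c x y z)
     = hom_jac scale br al b c ((al ^^ k) x) ((al ^^ k) y) ((al ^^ k) z)"
proof -
  interpret module_hom scale scale "al ^^ k"
    by (rule module_hom_linearI[OF linear_funpow[OF lin]])
  show ?thesis
    using multiplicative_funpow[OF mult, of k]
    unfolding hom_jac_def multiplicative_def
    by (simp add: diff scale funpow_swap1)
qed

lemma hom_jac_twist:
  "hom_jac scale (\<lambda>x y. (al ^^ m) (br x y)) (al ^^ Suc m) b c x y z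
     = (al ^^ (m + m)) (hom_jac scale br al b c x y z)"
proof -
  interpret module_hom scale scale "al ^^ (m + m)"
    by (rule module_hom_linearI[OF linear_funpow[OF lin]])
  show ?thesis
    using multiplicative_funpow[OF mult]
    unfolding hom_jac_def multiplicative_def
    by (simp add: diff scale funpow_add_apply funpow_swap1)
qed

lemma hom_jac_twist_funpow:
  "hom_jac scale (\<lambda>x y. (al ^^ m) (br x y)) (al ^^ Suc m) b c ((al ^^ m) x) ((al ^^ m) y) ((al ^^ m) z)
     = (al ^^ (m + m + m)) (hom_jac scale br al b c x y z)"
  by (simp only: hom_jac_twist funpow_hom_jac[symmetric] funpow_add_apply)

lemma hom_malcev_identity_twist:
  fixes m :: nat
  assumes "scale 2 (br (al (al t)) (hom_jac scale br al b c x y z)) =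
      hom_jac scale br al a (b + c) (al t) (al x) (br y z)
    + scale r (hom_jac scale br al b (c + a) (al t) (al y) (br z x))
    + scale s (hom_jac scale br al c (a + b) (al t) (al z) (br x y))"
  defines "br' \<equiv> \<lambda>x y. (al ^^ m) (br x y)" and "al' \<equiv> al ^^ Suc m"
  shows "scale 2 (br' (al' (al' t)) (hom_jac scale br' al' b c x y z)) =
      hom_jac scale br' al' a (b + c) (al' t) (al' x) (br' y z)
    + scale r (hom_jac scale br' al' b (c + a) (al' t) (al' y) (br' z x))
    + scale s (hom_jac scale br' al' c (a + b) (al' t) (al' z) (br' x y))"
proof -
  interpret module_hom scale scale "al ^^ (m + m + m)"
    by (rule module_hom_linearI[OF linear_funpow[OF lin]])
  have lhs: "br' (al' (al' t)) (hom_jac scale br' al' b c x y z)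
      = (al ^^ (m + m + m)) (br (al (al t)) (hom_jac scale br al b c x y z))"
    using multiplicative_funpow[OF mult]
    unfolding br'_def al'_def hom_jac_twist multiplicative_def
    by (simp add: funpow_add_apply funpow_swap1 ac_simps)
  have rhs: "hom_jac scale br' al' p q (al' u) (al' v) (br' w w')
      = (al ^^ (m + m + m)) (hom_jac scale br al p q (al u) (al v) (br w w'))" for p q u v w w'
    unfolding br'_def al'_def funpow_Suc_right comp_def hom_jac_twist_funpow[symmetric] ..
  show ?thesis
    unfolding lhs rhs using arg_cong[OF assms(1), of "al ^^ (m + m + m)"] by (simp add: add scale)
qed

end

lemma hom_malcev_superalgebra_twist:
  assumes malcev: "hom_malcev_superalgebra scale V br al"
  shows "hom_malcev_superalgebra scale V (\<lambda>x y. (al ^^ m) (br x y)) (al ^^ Suc m)"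
proof -
  have hs: "hom_superalgebra scale V br al" and mult: "multiplicative br al"
    using malcev unfolding hom_malcev_superalgebra_def multiplicative_def by blast+
  have lin: "Vector_Spaces.linear scale scale al"
    using hs unfolding hom_superalgebra_def by blast
  interpret module_hom scale scale "al ^^ m"
    by (rule module_hom_linearI[OF linear_funpow[OF lin]])
  show ?thesis
    unfolding hom_malcev_superalgebra_def
  proof (intro conjI hom_superalgebra_twist[OF hs] allI ballI)
    fix x y
    show "(al ^^ Suc m) ((al ^^ m) (br x y)) = (al ^^ m) (br ((al ^^ Suc m) x) ((al ^^ Suc m) y))"
      using multiplicative_funpow[OF mult] unfolding multiplicative_def
      by (simp add: funpow_add_apply add.commute del: funpow.simps)
  next
    fix i j x y assume "i \<in> {0,1::nat}" "j \<in> {0,1::nat}" "x \<in> V i" "y \<in> V j"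
    with malcev have "br x y = - scale ((-1) ^ (i * j)) (br y x)"
      unfolding hom_malcev_superalgebra_def by blast
    then show "(al ^^ m) (br x y) = - scale ((-1) ^ (i * j)) ((al ^^ m) (br y x))"
      by (simp add: neg scale)
  qed (intro hom_malcev_identity_twist[OF lin mult],
       use malcev in \<open>unfold hom_malcev_superalgebra_def, blast\<close>)
qed

theorem mainTheorem10:
  fixes scale :: "'k::field_char_0 \<Rightarrow> 'v::ab_group_add \<Rightarrow> 'v"
    and V :: "nat \<Rightarrow> 'v set"
    and br :: "'v \<Rightarrow> 'v \<Rightarrow> 'v"
    and al :: "'v \<Rightarrow> 'v"
  assumes "alg_closed_field TYPE('k)"
    and "hom_malcev_superalgebra scale V br al"
    and "multiplicative br al"
  shows "\<forall>n::nat. hom_malcev_superalgebra scale V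
           (\<lambda>x y. (al ^^ (2 ^ n - 1)) (br x y)) (al ^^ (2 ^ n))"
proof
  fix n :: nat
  have "(2::nat) ^ n = Suc (2 ^ n - 1)"
    by simp
  then show "hom_malcev_superalgebra scale V (\<lambda>x y. (al ^^ (2 ^ n - 1)) (br x y)) (al ^^ (2 ^ n))"
    using hom_malcev_superalgebra_twist[OF assms(2)] by metis
qed

end
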